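(* Let $f:X\to Y$ be a continuous map of sober topological spaces which is an epimorphism in the category of sober spaces and continuous maps, and suppose that $X$ is noetherian. Then $f$ is surjective.
   Context: A topological space is sober if every irreducible closed subset has a unique generic point. A topological space is noetherian if every descending chain of closed subsets stabilizes. *)

theory Defs
  imports "HOL-Analysis.Analysis"
begin

definition irreducible_in :: "'a topology \<Rightarrow> 'a set \<Rightarrow> bool" where
  "irreducible_in X S \<longleftrightarrow> S \<subseteq> topspace X \<and> S \<noteq> {} \<and>
     (\<forall>C1 C2. closedin X C1 \<and> closedin X C2 \<and> S \<subseteq> C1 \<union> C2 \<longrightarrow> S \<subseteq> C1 \<or> S \<subseteq> C2)"

definition generic_point :: "'a topology \<Rightarrow> 'a set \<Rightarrow> 'a \<Rightarrow> bool" where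
  "generic_point X S x \<longleftrightarrow> x \<in> topspace X \<and> X closure_of {x} = S"

definition sober :: "'a topology \<Rightarrow> bool" where
  "sober X \<longleftrightarrow> (\<forall>S. closedin X S \<and> irreducible_in X S \<longrightarrow> (\<exists>!x. generic_point X S x))"

definition noetherian_space :: "'a topology \<Rightarrow> bool" where
  "noetherian_space X \<longleftrightarrow>
     (\<forall>C :: nat \<Rightarrow> 'a set. (\<forall>n. closedin X (C n)) \<and> decseq C \<longrightarrow> (\<exists>N. \<forall>n\<ge>N. C n = C N))"

text \<open>Epimorphism in the category of sober spaces, tested against sober spaces whose points
  live in the type the type of sets of points of Y.\<close>
definition sober_epi :: "'a topology \<Rightarrow> 'b topology \<Rightarrow> ('a \<Rightarrow> 'b) \<Rightarrow> bool" where
  "sober_epi X Y f \<longleftrightarrow> sober X \<and> sober Y \<and> continuous_map X Y f \<and>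
     (\<forall>(Z :: 'b set topology) g h.
        sober Z \<and> continuous_map Y Z g \<and> continuous_map Y Z h \<and>
        (\<forall>x\<in>topspace X. g (f x) = h (f x)) \<longrightarrow> (\<forall>y\<in>topspace Y. g y = h y))"

end

theory Submission
  imports Defs
begin

text \<open>Suppose \<open>y\<close> is not in the image and let \<open>C\<close> be the closure of \<open>y\<close>. Testing the
  epimorphism against the Sierpinski space shows that \<open>y\<close> lies in the closure of the image of
  the closed set \<open>f\<^sup>-\<^sup>1(C)\<close>. By noetherianity there is a minimal closed \<open>B \<subseteq> f\<^sup>-\<^sup>1(C)\<close> with
  \<open>y \<in> cl (f B)\<close>; minimality makes \<open>B\<close> irreducible, so it has a generic point \<open>x\<close>. Then
  \<open>cl {f x} = cl (f B) = C\<close>, and sobriety of \<open>Y\<close> forces \<open>f x = y\<close>.\<close>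

definition sierpinski_space :: "'a \<Rightarrow> 'a \<Rightarrow> 'a topology" where
  "sierpinski_space a b = topology (\<lambda>S. S \<in> {{}, {a}, {a, b}})"

lemma openin_sierpinski_space:
  "openin (sierpinski_space a b) S \<longleftrightarrow> S \<in> {{}, {a}, {a, b}}"
proof -
  have "istopology (\<lambda>S. S \<in> {{}, {a}, {a, b}})"
  proof -
    have "\<Union>K \<in> {{}, {a}, {a, b}}" if K: "K \<subseteq> {{}, {a}, {a, b}}" for K
    proof -
      consider "{a, b} \<in> K" | "{a, b} \<notin> K" "{a} \<in> K" | "K \<subseteq> {{}}"
        using K by blast
      then show ?thesis
      proof cases
        case 1
        with K have "\<Union>K = {a, b}" by blast
        then show ?thesis by simp
      next
        case 2
        with K have "\<Union>K = {a}" by blast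
        then show ?thesis by simp
      qed auto
    qed
    then show ?thesis
      unfolding istopology_def by auto
  qed
  then show ?thesis
    unfolding sierpinski_space_def by (simp add: topology_inverse')
qed

lemma topspace_sierpinski_space: "topspace (sierpinski_space a b) = {a, b}"
proof (rule antisym)
  have "topspace (sierpinski_space a b) \<in> {{}, {a}, {a, b}}"
    using openin_topspace[of "sierpinski_space a b"] by (simp only: openin_sierpinski_space)
  then show "topspace (sierpinski_space a b) \<subseteq> {a, b}"
    by blast
  show "{a, b} \<subseteq> topspace (sierpinski_space a b)"
    by (rule openin_subset) (simp add: openin_sierpinski_space)
qed

lemma closedin_sierpinski_space:
  assumes "a \<noteq> b"
  shows "closedin (sierpinski_space a b) S \<longleftrightarrow> S \<in> {{}, {b}, {a, b}}"
  using assms unfolding closedin_def openin_sierpinski_space topspace_sierpinski_space by auto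

lemma sober_sierpinski_space:
  assumes "a \<noteq> b"
  shows "sober (sierpinski_space a b)"
proof -
  have cl_b: "sierpinski_space a b closure_of {b} = {b}"
    by (simp add: closure_of_closedin closedin_sierpinski_space[OF assms])
  have cl_a: "sierpinski_space a b closure_of {a} = {a, b}"
  proof -
    have "a \<in> sierpinski_space a b closure_of {a}"
      using closure_of_subset[of "{a}" "sierpinski_space a b"]
      by (simp add: topspace_sierpinski_space)
    moreover have "sierpinski_space a b closure_of {a} \<in> {{}, {b}, {a, b}}"
      using closedin_closure_of closedin_sierpinski_space[OF assms] by blast
    ultimately show ?thesis
      using assms by blast
  qed
  have "\<exists>!x. generic_point (sierpinski_space a b) S x"
    if "closedin (sierpinski_space a b) S" "irreducible_in (sierpinski_space a b) S" for S
  proof -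
    from that have "S = {b} \<or> S = {a, b}"
      using assms by (auto simp: closedin_sierpinski_space irreducible_in_def)
    then show ?thesis
      using assms cl_a cl_b
      by (auto simp: generic_point_def topspace_sierpinski_space doubleton_eq_iff)
  qed
  then show ?thesis
    unfolding sober_def by blast
qed

lemma continuous_map_sierpinski_space_indicator:
  assumes "openin Y U"
  shows "continuous_map Y (sierpinski_space a b) (\<lambda>p. if p \<in> U then a else b)"
  unfolding continuous_map_def topspace_sierpinski_space openin_sierpinski_space
proof (intro conjI ballI allI impI)
  show "(\<lambda>p. if p \<in> U then a else b) \<in> topspace Y \<rightarrow> {a, b}"
    by auto
  fix W assume "W \<in> {{}, {a}, {a, b}}"
  then consider "W = {}" | "W = {a}" "a \<noteq> b" | "W = {a}" "a = b" | "W = {a, b}"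
    by blast
  then show "openin Y {p \<in> topspace Y. (if p \<in> U then a else b) \<in> W}"
  proof cases
    case 2
    then have "{p \<in> topspace Y. (if p \<in> U then a else b) \<in> W} = U"
      using openin_subset[OF assms] by auto
    with assms show ?thesis by simp
  qed simp_all
qed

text \<open>Compare the indicators of the complements of \<open>C\<close> and of \<open>cl (C \<inter> f X)\<close>: they agree on
  \<open>f X\<close>, hence everywhere.\<close>
lemma sober_epi_closedin_subset_closure_of_image:
  assumes "sober_epi X Y f" and "closedin Y C"
  shows "C \<subseteq> Y closure_of (C \<inter> f ` topspace X)"
proof
  fix y assume "y \<in> C"
  define D where "D = Y closure_of (C \<inter> f ` topspace X)"
  have "D \<subseteq> C"
    unfolding D_def using assms(2) by (simp add: closure_of_minimal)
  have fX: "f ` topspace X \<subseteq> topspace Y"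
    using assms(1) unfolding sober_epi_def by (simp add: continuous_map_image_subset_topspace)
  define g :: "'b \<Rightarrow> 'b set" where "g p = (if p \<in> topspace Y - D then UNIV else {})" for p
  define h :: "'b \<Rightarrow> 'b set" where "h p = (if p \<in> topspace Y - C then UNIV else {})" for p
  have "continuous_map Y (sierpinski_space UNIV {}) g" "continuous_map Y (sierpinski_space UNIV {}) h"
    unfolding g_def h_def
    by (intro continuous_map_sierpinski_space_indicator openin_diff; simp add: assms(2) D_def)+
  moreover have "g (f x) = h (f x)" if "x \<in> topspace X" for x
    using that fX \<open>D \<subseteq> C\<close> closure_of_subset[of "C \<inter> f ` topspace X" Y]
    unfolding g_def h_def D_def by auto
  moreover have "y \<in> topspace Y"
    using \<open>y \<in> C\<close> assms(2) closedin_subset by blast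
  ultimately have "g y = h y"
    using assms(1) sober_sierpinski_space[of "UNIV :: 'b set" "{}"] unfolding sober_epi_def by blast
  with \<open>y \<in> C\<close> \<open>y \<in> topspace Y\<close> show "y \<in> D"
    unfolding g_def h_def by (auto split: if_splits)
qed

lemma noetherian_space_wf_closedin_psubset:
  assumes "noetherian_space X"
  shows "wf {(B', B). closedin X B' \<and> closedin X B \<and> B' \<subset> B}"
  unfolding wf_iff_no_infinite_down_chain
proof
  assume "\<exists>c. \<forall>i. (c (Suc i), c i) \<in> {(B', B). closedin X B' \<and> closedin X B \<and> B' \<subset> B}"
  then obtain c where c: "\<forall>i. closedin X (c (Suc i)) \<and> closedin X (c i) \<and> c (Suc i) \<subset> c i"
    by auto
  then have closed: "\<And>i. closedin X (c i)" and strict: "\<And>i. c (Suc i) \<subset> c i"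
    by blast+
  have "decseq c"
    using strict by (intro decseq_SucI) (simp add: less_imp_le)
  then obtain N where "\<forall>n\<ge>N. c n = c N"
    using assms closed unfolding noetherian_space_def by presburger
  then have "c (Suc N) = c N"
    using le_SucI by blast
  with strict[of N] show False
    by simp
qed

lemma irreducible_in_closure_of_singleton:
  assumes "y \<in> topspace Y"
  shows "irreducible_in Y (Y closure_of {y})"
proof -
  have y: "y \<in> Y closure_of {y}"
    using assms closure_of_subset[of "{y}" Y] by simp
  have "Y closure_of {y} \<subseteq> C"
    if "closedin Y C" "y \<in> C" for C
    using that by (simp add: closure_of_minimal)
  then show ?thesis
    using y unfolding irreducible_in_def by (auto simp: closure_of_subset_topspace)
qed

lemma sober_specialization_antisym:
  assumes "sober Y" "x \<in> topspace Y" "z \<in> topspace Y"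
    and "x \<in> Y closure_of {z}" "z \<in> Y closure_of {x}"
  shows "x = z"
proof -
  have "\<exists>!w. generic_point Y (Y closure_of {z}) w"
    using assms(1) irreducible_in_closure_of_singleton[OF assms(3)]
    unfolding sober_def by (simp add: closedin_closure_of)
  moreover have "Y closure_of {x} = Y closure_of {z}"
    using assms(4,5) by (intro antisym closure_of_minimal) simp_all
  then have "generic_point Y (Y closure_of {z}) x" "generic_point Y (Y closure_of {z}) z"
    using assms(2,3) unfolding generic_point_def by auto
  ultimately show ?thesis
    by (metis ex1E)
qed

lemma closure_of_image_closure_of_singleton:
  assumes "continuous_map X Y f" "x \<in> topspace X"
  shows "Y closure_of (f ` (X closure_of {x})) = Y closure_of {f x}"
proof (rule antisym)
  show "Y closure_of (f ` (X closure_of {x})) \<subseteq> Y closure_of {f x}"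
    using continuous_map_image_closure_subset[OF assms(1), of "{x}"]
    by (simp add: closure_of_minimal)
  show "Y closure_of {f x} \<subseteq> Y closure_of (f ` (X closure_of {x}))"
    using assms closure_of_subset[of "{x}" X] by (intro closure_of_mono) auto
qed

text \<open>A closed \<open>B\<close> minimal with \<open>y \<in> cl (f B)\<close> is irreducible, since the closure of an image
  of a union is the union of the closures.\<close>
lemma noetherian_space_irreducible_in_closure_of_image:
  assumes "noetherian_space X" "closedin X B0" "y \<in> Y closure_of (f ` B0)"
  obtains B where "closedin X B" "B \<subseteq> B0" "irreducible_in X B" "y \<in> Y closure_of (f ` B)"
proof -
  define Q where "Q = {B. closedin X B \<and> B \<subseteq> B0 \<and> y \<in> Y closure_of (f ` B)}"
  have "B0 \<in> Q"
    unfolding Q_def using assms(2,3) by simp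
  then obtain B where "B \<in> Q"
    and min: "\<And>B'. (B', B) \<in> {(B', B). closedin X B' \<and> closedin X B \<and> B' \<subset> B} \<Longrightarrow> B' \<notin> Q"
    by (rule wfE_min[OF noetherian_space_wf_closedin_psubset[OF assms(1)]]) iprover
  then have B: "closedin X B" "B \<subseteq> B0" "y \<in> Y closure_of (f ` B)"
    unfolding Q_def by simp_all
  have "B \<subseteq> C1 \<or> B \<subseteq> C2" if C: "closedin X C1" "closedin X C2" "B \<subseteq> C1 \<union> C2" for C1 C2
  proof -
    have "f ` B = f ` (B \<inter> C1) \<union> f ` (B \<inter> C2)"
      using C(3) by blast
    with B(3) have "y \<in> Y closure_of (f ` (B \<inter> C1)) \<or> y \<in> Y closure_of (f ` (B \<inter> C2))"
      by (simp add: closure_of_Un)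
    moreover have "B \<inter> C \<in> Q \<Longrightarrow> B \<subseteq> C" if "closedin X C" for C
      using min[of "B \<inter> C"] B(1) that by (auto simp: closedin_Int)
    ultimately show ?thesis
      using B(1,2) C(1,2) unfolding Q_def by (auto simp: closedin_Int)
  qed
  moreover have "B \<subseteq> topspace X" "B \<noteq> {}"
    using B by (auto simp: closedin_subset)
  ultimately have "irreducible_in X B"
    unfolding irreducible_in_def by blast
  with B that show thesis
    by blast
qed

theorem proposition1p7:
  fixes X :: "'a topology" and Y :: "'b topology" and f :: "'a \<Rightarrow> 'b"
  assumes "sober X" and "sober Y" and "continuous_map X Y f"
    and "sober_epi X Y f"
    and "noetherian_space X"
  shows "f ` topspace X = topspace Y"
proof (rule ccontr)
  have fX: "f ` topspace X \<subseteq> topspace Y"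
    using assms(3) by (simp add: continuous_map_image_subset_topspace)
  assume "f ` topspace X \<noteq> topspace Y"
  with fX obtain y where y: "y \<in> topspace Y" "y \<notin> f ` topspace X" by blast
  define C where "C = Y closure_of {y}"
  define B0 where "B0 = {x \<in> topspace X. f x \<in> C}"
  have "f ` B0 = C \<inter> f ` topspace X"
    unfolding B0_def by auto
  moreover have "y \<in> C"
    using y(1) closure_of_subset[of "{y}" Y] unfolding C_def by simp
  ultimately have y_B0: "y \<in> Y closure_of (f ` B0)"
    using sober_epi_closedin_subset_closure_of_image[OF assms(4), of C] unfolding C_def by auto
  have "closedin X B0"
    unfolding B0_def C_def by (rule closedin_continuous_map_preimage[OF assms(3)]) simp
  then obtain B
    where B: "closedin X B" "B \<subseteq> B0" "irreducible_in X B" "y \<in> Y closure_of (f ` B)"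
    by (rule noetherian_space_irreducible_in_closure_of_image[OF assms(5) _ y_B0])
  then obtain x where x: "x \<in> topspace X" "X closure_of {x} = B"
    using assms(1) unfolding sober_def generic_point_def by blast
  then have "f x \<in> C"
    using B(2) closure_of_subset[of "{x}" X] unfolding B0_def by auto
  moreover have "y \<in> Y closure_of {f x}"
    using B(4) closure_of_image_closure_of_singleton[OF assms(3) x(1)] x(2) by simp
  ultimately have "f x = y"
    using sober_specialization_antisym[OF assms(2)] x(1) y(1) fX unfolding C_def by blast
  with x(1) y(2) show False by blast
qed

end
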